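(* Let $X$ be a real Banach space and let $M\subset X\times X^*$ be a linear subspace (a linear point-to-set operator $M:X\rightrightarrows X^*$). Then: (1) if $M$ is skew, then $M$ is maximal self-cancelling; (2) if $M$ is maximal self-cancelling and $D(M)$ is closed, then $M$ is skew; (3) if $M$ is maximal self-cancelling, $R(M)$ is closed and $X$ is reflexive, then $M$ is skew.
   Context: $\langle x,x^*\rangle=x^*(x)$. For $B\subset X\times X^*$, $B^\vdash=\{(y,y^* )\mid \langle x,y^*\rangle+\langle y,x^*\rangle=0\ \forall (x,x^* )\in B\}$ and $-B=\{(x,-x^* )\mid (x,x^* )\in B\}$. The adjoint of a linear $M$ is $M^*=(-M)^\vdash$, and $M$ is skew if $M=-M^*$ (equivalently $M=M^\vdash$). $M$ is self-cancelling if it is a linear subspace with $\langle x,x^*\rangle=0$ for all $(x,x^* )\in M$, and maximal self-cancelling if it is self-cancelling and not properly contained in any self-cancelling subset of $X\times X^*$. $D(M)=\{x\mid \exists x^*,\ (x,x^* )\in M\}$ and $R(M)=\{x^*\mid \exists x,\ (x,x^* )\in M\}$. *)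

theory Defs
  imports "HOL-Analysis.Analysis"
begin

(* The dual X* of a real Banach space X is the space of bounded linear
   functionals 'a =>L real (norm topology); the pairing is x* applied to x. *)

definition perp_op :: "('a::real_normed_vector \<times> ('a \<Rightarrow>\<^sub>L real)) set \<Rightarrow> ('a \<times> ('a \<Rightarrow>\<^sub>L real)) set" where
  "perp_op B = {(y, ys). \<forall>(x, xs)\<in>B. blinfun_apply ys x + blinfun_apply xs y = 0}"

definition neg_op :: "('a::real_normed_vector \<times> ('a \<Rightarrow>\<^sub>L real)) set \<Rightarrow> ('a \<times> ('a \<Rightarrow>\<^sub>L real)) set" where
  "neg_op B = {(x, - xs) | x xs. (x, xs) \<in> B}"

definition adjoint_op :: "('a::real_normed_vector \<times> ('a \<Rightarrow>\<^sub>L real)) set \<Rightarrow> ('a \<times> ('a \<Rightarrow>\<^sub>L real)) set" where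
  "adjoint_op M = perp_op (neg_op M)"

definition skew_op :: "('a::real_normed_vector \<times> ('a \<Rightarrow>\<^sub>L real)) set \<Rightarrow> bool" where
  "skew_op M \<longleftrightarrow> M = neg_op (adjoint_op M)"

definition self_cancelling :: "('a::real_normed_vector \<times> ('a \<Rightarrow>\<^sub>L real)) set \<Rightarrow> bool" where
  "self_cancelling M \<longleftrightarrow> subspace M \<and> (\<forall>(x, xs)\<in>M. blinfun_apply xs x = 0)"

definition max_self_cancelling :: "('a::real_normed_vector \<times> ('a \<Rightarrow>\<^sub>L real)) set \<Rightarrow> bool" where
  "max_self_cancelling M \<longleftrightarrow> self_cancelling M \<and>
     (\<forall>N. self_cancelling N \<and> M \<subseteq> N \<longrightarrow> N = M)"

definition dom_op :: "('a \<times> 'b) set \<Rightarrow> 'a set" where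
  "dom_op M = fst ` M"

definition ran_op :: "('a \<times> 'b) set \<Rightarrow> 'b set" where
  "ran_op M = snd ` M"

definition reflexive_space :: "'a::real_normed_vector itself \<Rightarrow> bool" where
  "reflexive_space _ \<longleftrightarrow>
     (\<forall>\<phi> :: ('a \<Rightarrow>\<^sub>L real) \<Rightarrow>\<^sub>L real. \<exists>x::'a. \<forall>f. blinfun_apply \<phi> f = blinfun_apply f x)"

end

theory Submission
  imports Defs
begin

(* For a self-cancelling M, polarisation gives M \<subseteq> perp_op M, and M is skew iff
   M = perp_op M.  If (y, ys) \<in> perp_op M and ys y = 0, then M + span {(y, ys)} is still
   self-cancelling, so a maximal M already contains every such element.  Skewness then
   gives maximality, since a self-cancelling N \<supseteq> M satisfies
   N \<subseteq> perp_op N \<subseteq> perp_op M = M.  Conversely, for (y, ys) \<in> perp_op M we get ys y = 0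
   as soon as y \<in> D(M) or ys \<in> R(M).  If y \<notin> D(M) and D(M) is closed, Hahn-Banach gives
   f vanishing on D(M) with f y \<noteq> 0; then (0, f) \<in> perp_op M, hence (0, f) \<in> M, and pairing
   it with (y, ys) yields f y = 0.  The range case is dual: reflexivity turns the
   functional on X* separating ys from R(M) into a point of X.  The separation theorem
   follows from Zorn's lemma applied to graphs of norm-dominated linear functionals. *)

lemma span_insert_subspace:
  assumes "subspace S"
  shows "span (insert v S) = {s + t *\<^sub>R v | s t. s \<in> S}"
proof -
  have "x - k *\<^sub>R v \<in> S \<longleftrightarrow> (\<exists>s. s \<in> S \<and> x = s + k *\<^sub>R v)" for x k
    by (metis add_diff_cancel diff_add_cancel)
  then show ?thesis
    unfolding span_insert span_eq_iff[THEN iffD2, OF assms] by blast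
qed

lemma subspace_add_scaleR_eq_0:
  assumes "subspace S" "y \<notin> S" "s \<in> S" "s + t *\<^sub>R y = 0"
  shows "t = 0"
proof (rule ccontr)
  assume "t \<noteq> 0"
  then have "y = (- 1 / t) *\<^sub>R s"
    using assms(4) by (simp add: eq_neg_iff_add_eq_0[symmetric] add.commute)
  then show False
    using assms(1-3) subspace_scale by metis
qed

(* Graphs of linear functionals defined on a subspace and bounded above by the norm:
   as sets, they are ordered by inclusion exactly as extensions of functionals. *)
definition norm_dominated_graph :: "('a::real_normed_vector \<times> real) set \<Rightarrow> bool" where
  "norm_dominated_graph G \<longleftrightarrow>
     subspace G \<and> (\<forall>a. (0, a) \<in> G \<longrightarrow> a = 0) \<and> (\<forall>(x, a)\<in>G. a \<le> norm x)"

lemma norm_dominated_graph_unique: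
  assumes "norm_dominated_graph G" "(x, a) \<in> G" "(x, b) \<in> G"
  shows "a = b"
proof -
  have "(x, a) - (x, b) \<in> G"
    using assms by (simp add: norm_dominated_graph_def subspace_diff del: diff_Pair)
  then show ?thesis
    using assms(1) by (auto simp: norm_dominated_graph_def)
qed

lemma subspace_Union_chain:
  assumes "C \<noteq> {}" "\<And>S. S \<in> C \<Longrightarrow> subspace S"
    "\<And>X Y. X \<in> C \<Longrightarrow> Y \<in> C \<Longrightarrow> X \<subseteq> Y \<or> Y \<subseteq> X"
  shows "subspace (\<Union>C)"
  unfolding subspace_def
proof (intro conjI ballI allI)
  show "0 \<in> \<Union>C"
    using assms(1,2) subspace_0 by blast
next
  fix x y assume "x \<in> \<Union>C" "y \<in> \<Union>C"
  then obtain X Y where "X \<in> C" "Y \<in> C" "x \<in> X" "y \<in> Y" by blast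
  with assms(2) assms(3)[of X Y] show "x + y \<in> \<Union>C"
    by (meson UnionI in_mono subspace_add)
next
  fix c x assume "x \<in> \<Union>C"
  with assms(2) show "c *\<^sub>R x \<in> \<Union>C"
    by (meson UnionE UnionI subspace_scale)
qed

lemma norm_dominated_graph_Union_chain:
  assumes "C \<noteq> {}" "subset.chain {G. norm_dominated_graph G} C"
  shows "norm_dominated_graph (\<Union>C)"
proof -
  have "subspace (\<Union>C)"
    using assms by (intro subspace_Union_chain) (auto simp: subset_chain_def norm_dominated_graph_def)
  with assms show ?thesis
    by (fastforce simp: subset_chain_def norm_dominated_graph_def)
qed

lemma norm_dominated_graph_extension_bound:
  assumes G: "norm_dominated_graph G" "(x, a) \<in> G"
    and below: "\<And>u b. (u, b) \<in> G \<Longrightarrow> b - norm (u - y) \<le> c"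
    and above: "\<And>u b. (u, b) \<in> G \<Longrightarrow> c \<le> norm (u + y) - b"
  shows "a + t * c \<le> norm (x + t *\<^sub>R y)"
proof -
  have sG: "subspace G"
    using G(1) by (simp add: norm_dominated_graph_def)
  define w where "w = norm ((1 / t) *\<^sub>R x + y)"
  have scaled: "(r *\<^sub>R x, r * a) \<in> G" for r
    using subspace_scale[OF sG G(2), of r] by simp
  have norm_eq: "\<bar>t\<bar> * w = norm (x + t *\<^sub>R y)" if "t \<noteq> 0"
  proof -
    have "x + t *\<^sub>R y = t *\<^sub>R ((1 / t) *\<^sub>R x + y)"
      using that by (simp add: scaleR_add_right)
    then show ?thesis by (simp add: w_def)
  qed
  consider "t = 0" | "t > 0" | "t < 0" by linarith
  then show ?thesis
  proof cases
    case 1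
    then show ?thesis using G by (auto simp: norm_dominated_graph_def)
  next
    case 2
    have "c \<le> w - (1 / t) * a"
      using above[OF scaled[of "1 / t"]] by (simp add: w_def)
    then have "a + t * c \<le> t * w"
      using 2 by (simp add: field_simps)
    also have "t * w = norm (x + t *\<^sub>R y)"
      using 2 norm_eq by simp
    finally show ?thesis .
  next
    case 3
    have "- (1 / t) * a - w \<le> c"
      using below[OF scaled[of "- (1 / t)"]] by (simp add: w_def norm_minus_commute add.commute)
    then have "a + t * c \<le> - t * w"
      using 3 by (simp add: field_simps)
    also have "- t * w = norm (x + t *\<^sub>R y)"
      using 3 norm_eq by simp
    finally show ?thesis .
  qed
qed

lemma norm_dominated_graph_extend:
  assumes G: "norm_dominated_graph G" and y: "y \<notin> fst ` G"
  shows "\<exists>c. norm_dominated_graph (span (insert (y, c) G))"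
proof -
  have sG: "subspace G" and bd: "\<And>x a. (x, a) \<in> G \<Longrightarrow> a \<le> norm x"
    using G by (auto simp: norm_dominated_graph_def)
  have sep: "a - norm (u - y) \<le> norm (v + y) - b" if "(u, a) \<in> G" "(v, b) \<in> G" for u a v b
  proof -
    have "a + b \<le> norm (u + v)"
      using bd subspace_add[OF sG that] by simp
    also have "\<dots> \<le> norm (u - y) + norm (v + y)"
      using norm_triangle_ineq[of "u - y" "v + y"] by simp
    finally show ?thesis by simp
  qed
  (* Any c between the sup of the left-hand sides and the inf of the right-hand sides
     of sep extends the functional to y with value c. *)
  define c where "c = Sup {a - norm (u - y) | u a. (u, a) \<in> G}"
  have "(0, 0) \<in> G"
    using subspace_0[OF sG] by (simp add: zero_prod_def)
  then have "bdd_above {a - norm (u - y) | u a. (u, a) \<in> G}"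
    using sep[of _ _ 0 0] by (auto intro!: bdd_aboveI[of _ "norm y"])
  then have below: "a - norm (u - y) \<le> c" and above: "c \<le> norm (u + y) - a"
    if "(u, a) \<in> G" for u a
    unfolding c_def using that sep[of _ _ u a] by (auto intro!: cSup_upper cSup_least)
  have graph: "p \<in> span (insert (y, c) G) \<longleftrightarrow> (\<exists>x a t. (x, a) \<in> G \<and> p = (x + t *\<^sub>R y, a + t * c))" for p
    unfolding span_insert_subspace[OF sG] by force
  have "subspace (fst ` G)"
    using sG by (rule linear_subspace_image[OF bounded_linear_fst[THEN bounded_linear.linear]])
  then have "t = 0" if "(x, a) \<in> G" "x + t *\<^sub>R y = 0" for x a t
    using subspace_add_scaleR_eq_0[OF _ y] that by force
  then have "b = 0" if "(0, b) \<in> span (insert (y, c) G)" for b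
    using that G unfolding graph norm_dominated_graph_def by fastforce
  moreover have "b \<le> norm w" if "(w, b) \<in> span (insert (y, c) G)" for w b
    using that norm_dominated_graph_extension_bound[OF G _ below above] unfolding graph by auto
  ultimately have "norm_dominated_graph (span (insert (y, c) G))"
    unfolding norm_dominated_graph_def by auto
  then show ?thesis ..
qed

theorem hahn_banach_norm_dominated:
  fixes G0 :: "('a::real_normed_vector \<times> real) set"
  assumes "norm_dominated_graph G0"
  obtains h :: "'a \<Rightarrow>\<^sub>L real" where "\<And>x a. (x, a) \<in> G0 \<Longrightarrow> h x = a"
proof -
  have "\<exists>G\<in>{G. norm_dominated_graph G \<and> G0 \<subseteq> G}.
      \<forall>G'\<in>{G. norm_dominated_graph G \<and> G0 \<subseteq> G}. G \<subseteq> G' \<longrightarrow> G' = G"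
  proof (rule subset_Zorn_nonempty)
    fix C assume "C \<noteq> {}" "subset.chain {G. norm_dominated_graph G \<and> G0 \<subseteq> G} C"
    then show "\<Union>C \<in> {G. norm_dominated_graph G \<and> G0 \<subseteq> G}"
      using norm_dominated_graph_Union_chain[of C] by (auto simp: subset_chain_def)
  qed (use assms in blast)
  then obtain G where G: "norm_dominated_graph G" "G0 \<subseteq> G"
    and maximal: "\<And>G'. norm_dominated_graph G' \<Longrightarrow> G \<subseteq> G' \<Longrightarrow> G' = G"
    by (metis (no_types, lifting) mem_Collect_eq subset_trans)
  have sG: "subspace G"
    using G(1) by (simp add: norm_dominated_graph_def)
  have total: "x \<in> fst ` G" for x
  proof (rule ccontr)
    assume "x \<notin> fst ` G"
    then obtain c where c: "norm_dominated_graph (span (insert (x, c) G))"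
      using norm_dominated_graph_extend[OF G(1)] by blast
    then have "span (insert (x, c) G) = G"
      using maximal span_superset by blast
    then have "(x, c) \<in> G"
      using span_base[OF insertI1] by metis
    then show False
      using \<open>x \<notin> fst ` G\<close> by force
  qed
  define h where "h x = (THE a. (x, a) \<in> G)" for x
  have h_graph: "(x, a) \<in> G \<longleftrightarrow> h x = a" for x a
  proof -
    have h_eq: "h x = b" if "(x, b) \<in> G" for b
      unfolding h_def using that norm_dominated_graph_unique[OF G(1)] by blast
    obtain b where "(x, b) \<in> G"
      using total[of x] by force
    then show ?thesis
      using h_eq by blast
  qed
  have on_graph: "(x, h x) \<in> G" for x
    using h_graph by blast
  have add: "h (x + y) = h x + h y" for x y
    using subspace_add[OF sG on_graph on_graph] h_graph by simp
  have scale: "h (r *\<^sub>R x) = r * h x" for r x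
    using subspace_scale[OF sG on_graph] h_graph by simp
  have upper: "h x \<le> norm x" for x
    using G(1) on_graph unfolding norm_dominated_graph_def by blast
  have "\<bar>h x\<bar> \<le> norm x" for x
    using upper[of x] upper[of "- x"] scale[of "- 1" x] by (simp add: abs_le_iff)
  then have "bounded_linear h"
    using add scale by (intro bounded_linear_intro[of _ 1]) auto
  then show ?thesis
    using that[of "Blinfun h"] G(2) h_graph by (auto simp: bounded_linear_Blinfun_apply)
qed

lemma separating_functional_closed_subspace:
  fixes S :: "'a::real_normed_vector set"
  assumes S: "subspace S" "closed S" and y: "y \<notin> S"
  obtains f :: "'a \<Rightarrow>\<^sub>L real" where "\<And>s. s \<in> S \<Longrightarrow> f s = 0" "f y \<noteq> 0"
proof -
  define d where "d = infdist y S"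
  have "d > 0"
    using S y subspace_0 unfolding d_def by (blast intro: infdist_pos_not_in_closed)
  have sS0: "subspace (S \<times> {0 :: real})"
    using S(1) subspace_single_0 by (rule subspace_Times)
  have graph: "p \<in> span (insert (y, d) (S \<times> {0})) \<longleftrightarrow> (\<exists>s t. s \<in> S \<and> p = (s + t *\<^sub>R y, t * d))" for p
    unfolding span_insert_subspace[OF sS0] by force
  have "t * d \<le> norm (s + t *\<^sub>R y)" if "s \<in> S" for s t
  proof (cases "t > 0")
    case True
    have "d \<le> dist y (- (1 / t) *\<^sub>R s)"
      unfolding d_def using subspace_scale[OF S(1) that] by (rule infdist_le)
    also have "\<dots> = norm ((1 / t) *\<^sub>R (s + t *\<^sub>R y))"
      using True by (simp add: dist_norm scaleR_add_right add.commute)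
    also have "\<dots> = norm (s + t *\<^sub>R y) / t"
      using True by simp
    finally show ?thesis
      using True by (simp add: field_simps)
  qed (use \<open>d > 0\<close> in \<open>simp add: mult_nonpos_nonneg order_trans[OF _ norm_ge_zero]\<close>)
  moreover have "t = 0" if "s \<in> S" "s + t *\<^sub>R y = 0" for s t
    using subspace_add_scaleR_eq_0[OF S(1) y that] .
  ultimately have "norm_dominated_graph (span (insert (y, d) (S \<times> {0})))"
    unfolding norm_dominated_graph_def by (auto simp: graph)
  then obtain h :: "'a \<Rightarrow>\<^sub>L real" where "\<And>x a. (x, a) \<in> span (insert (y, d) (S \<times> {0})) \<Longrightarrow> h x = a"
    using hahn_banach_norm_dominated by blast
  moreover have "(y, d) \<in> span (insert (y, d) (S \<times> {0}))"
    by (simp add: span_base)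
  moreover have "(s, 0) \<in> span (insert (y, d) (S \<times> {0}))" if "s \<in> S" for s
    using that by (simp add: span_base)
  ultimately show ?thesis
    using that[of h] \<open>d > 0\<close> by force
qed

lemma mem_perp_op_iff:
  "(y, ys) \<in> perp_op B \<longleftrightarrow> (\<forall>(x, xs)\<in>B. blinfun_apply ys x + blinfun_apply xs y = 0)"
  by (simp add: perp_op_def)

lemma perp_op_antimono: "A \<subseteq> B \<Longrightarrow> perp_op B \<subseteq> perp_op A"
  by (auto simp: perp_op_def)

lemma subspace_perp_op: "subspace (perp_op B)"
  unfolding subspace_def
proof (intro conjI ballI allI)
  show "0 \<in> perp_op B"
    by (simp add: perp_op_def zero_prod_def split_def)
next
  fix p q assume "p \<in> perp_op B" "q \<in> perp_op B"
  moreover obtain y ys z zs where "p = (y, ys)" "q = (z, zs)"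
    by fastforce
  ultimately have perp: "blinfun_apply ys x + blinfun_apply xs y = 0"
    "blinfun_apply zs x + blinfun_apply xs z = 0" if "(x, xs) \<in> B" for x xs
    using that by (auto simp: mem_perp_op_iff)
  have "blinfun_apply (ys + zs) x + blinfun_apply xs (y + z) = 0" if "(x, xs) \<in> B" for x xs
    using perp[OF that] by (simp add: blinfun.add_left blinfun.add_right)
  then show "p + q \<in> perp_op B"
    using \<open>p = (y, ys)\<close> \<open>q = (z, zs)\<close> by (auto simp: mem_perp_op_iff)
next
  fix c p assume "p \<in> perp_op B"
  then show "c *\<^sub>R p \<in> perp_op B"
    by (cases p) (simp add: perp_op_def blinfun.scaleR_left blinfun.scaleR_right split_def
        flip: distrib_left)
qed

lemma neg_op_adjoint_op: "neg_op (adjoint_op M) = perp_op M"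
proof -
  have "(y, - ys) \<in> perp_op (neg_op M) \<longleftrightarrow> (y, ys) \<in> perp_op M" for y ys
    by (force simp: neg_op_def perp_op_def blinfun.minus_left)
  then show ?thesis
    unfolding adjoint_op_def neg_op_def by force
qed

lemma skew_op_iff_eq_perp_op: "skew_op M \<longleftrightarrow> M = perp_op M"
  by (simp add: skew_op_def neg_op_adjoint_op)

lemma self_cancelling_subset_perp_op:
  assumes "self_cancelling M"
  shows "M \<subseteq> perp_op M"
proof (clarify intro!: mem_perp_op_iff[THEN iffD2])
  have sM: "subspace M" and cancel: "\<And>x xs. (x, xs) \<in> M \<Longrightarrow> xs x = 0"
    using assms by (auto simp: self_cancelling_def)
  fix y ys x xs assume "(y, ys) \<in> M" "(x, xs) \<in> M"
  then have "(xs + ys) (x + y) = 0"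
    using cancel subspace_add[OF sM] by (metis add_Pair)
  then show "ys x + xs y = 0"
    using cancel \<open>(y, ys) \<in> M\<close> \<open>(x, xs) \<in> M\<close> by (simp add: blinfun.add_left blinfun.add_right)
qed

lemma skew_op_imp_max_self_cancelling:
  assumes "skew_op M"
  shows "max_self_cancelling M"
proof -
  have M: "M = perp_op M"
    using assms by (simp add: skew_op_iff_eq_perp_op)
  have "blinfun_apply xs x = 0" if "(x, xs) \<in> M" for x xs
    using that M[THEN equalityD1, THEN subsetD, OF that] by (force simp: mem_perp_op_iff)
  moreover have "subspace M"
    using subspace_perp_op M by metis
  ultimately have "self_cancelling M"
    by (auto simp: self_cancelling_def)
  moreover have "N = M" if "self_cancelling N" "M \<subseteq> N" for N
    using self_cancelling_subset_perp_op[OF that(1)] perp_op_antimono[OF that(2)] M that(2) by blast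
  ultimately show ?thesis
    by (auto simp: max_self_cancelling_def)
qed

lemma max_self_cancelling_perp_op_mem:
  assumes M: "max_self_cancelling M" and perp: "(y, ys) \<in> perp_op M" and "ys y = 0"
  shows "(y, ys) \<in> M"
proof -
  have sM: "subspace M" and cancel: "\<And>x xs. (x, xs) \<in> M \<Longrightarrow> xs x = 0"
    using M by (auto simp: max_self_cancelling_def self_cancelling_def)
  have "xs x = 0" if mem: "(x, xs) \<in> span (insert (y, ys) M)" for x xs
  proof -
    obtain u us t where u: "(u, us) \<in> M" and x: "x = u + t *\<^sub>R y" "xs = us + t *\<^sub>R ys"
      using mem unfolding span_insert_subspace[OF sM] by auto
    have "xs x = us u + t * (ys u + us y) + t * t * ys y"
      unfolding x by (simp add: blinfun.add_left blinfun.add_right blinfun.scaleR_left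
          blinfun.scaleR_right algebra_simps)
    then show ?thesis
      using cancel[OF u] perp u \<open>ys y = 0\<close> by (force simp: mem_perp_op_iff)
  qed
  then have "self_cancelling (span (insert (y, ys) M))"
    by (auto simp: self_cancelling_def)
  moreover have "M \<subseteq> span (insert (y, ys) M)"
    using span_superset by blast
  ultimately have "span (insert (y, ys) M) = M"
    using M by (simp add: max_self_cancelling_def)
  then show ?thesis
    using span_base[OF insertI1] by metis
qed

lemma max_self_cancelling_perp_op_memI:
  assumes M: "max_self_cancelling M" and perp: "(y, ys) \<in> perp_op M"
    and "y \<in> dom_op M \<or> ys \<in> ran_op M"
  shows "(y, ys) \<in> M"
proof -
  have cancel: "\<And>x xs. (x, xs) \<in> M \<Longrightarrow> xs x = 0"
    using M by (auto simp: max_self_cancelling_def self_cancelling_def)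
  from assms(3) obtain x xs where "(x, xs) \<in> M" "x = y \<or> xs = ys"
    by (auto simp: dom_op_def ran_op_def)
  then have "ys y = 0"
    using perp cancel by (force simp: mem_perp_op_iff)
  with M perp show ?thesis
    by (rule max_self_cancelling_perp_op_mem)
qed

lemma max_self_cancelling_skew_opI:
  assumes "max_self_cancelling M" "perp_op M \<subseteq> M"
  shows "skew_op M"
  using assms self_cancelling_subset_perp_op
  by (auto simp: skew_op_iff_eq_perp_op max_self_cancelling_def)

lemma subspace_dom_op:
  fixes M :: "('a::real_normed_vector \<times> 'b::real_normed_vector) set"
  shows "subspace M \<Longrightarrow> subspace (dom_op M)"
  unfolding dom_op_def by (rule linear_subspace_image[OF bounded_linear_fst[THEN bounded_linear.linear]])

lemma subspace_ran_op:
  fixes M :: "('a::real_normed_vector \<times> 'b::real_normed_vector) set"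
  shows "subspace M \<Longrightarrow> subspace (ran_op M)"
  unfolding ran_op_def by (rule linear_subspace_image[OF bounded_linear_snd[THEN bounded_linear.linear]])

lemma max_self_cancelling_closed_dom_op_skew:
  fixes M :: "('a::real_normed_vector \<times> ('a \<Rightarrow>\<^sub>L real)) set"
  assumes M: "max_self_cancelling M" and closed: "closed (dom_op M)"
  shows "skew_op M"
proof (rule max_self_cancelling_skew_opI[OF M], clarify)
  fix y ys assume perp: "(y, ys) \<in> perp_op M"
  have "y \<in> dom_op M"
  proof (rule ccontr)
    assume "y \<notin> dom_op M"
    moreover have "subspace (dom_op M)"
      using M subspace_dom_op by (auto simp: max_self_cancelling_def self_cancelling_def)
    ultimately obtain f :: "'a \<Rightarrow>\<^sub>L real" where f: "\<And>x. x \<in> dom_op M \<Longrightarrow> f x = 0" "f y \<noteq> 0"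
      using separating_functional_closed_subspace closed by metis
    then have "(0, f) \<in> perp_op M"
      by (force simp: mem_perp_op_iff dom_op_def)
    then have "(0, f) \<in> M"
      using max_self_cancelling_perp_op_mem[OF M] by simp
    then show False
      using perp f(2) by (force simp: mem_perp_op_iff)
  qed
  then show "(y, ys) \<in> M"
    using max_self_cancelling_perp_op_memI[OF M perp] by blast
qed

lemma max_self_cancelling_closed_ran_op_skew:
  fixes M :: "('a::real_normed_vector \<times> ('a \<Rightarrow>\<^sub>L real)) set"
  assumes M: "max_self_cancelling M" and closed: "closed (ran_op M)"
    and reflexive: "reflexive_space TYPE('a)"
  shows "skew_op M"
proof (rule max_self_cancelling_skew_opI[OF M], clarify)
  fix y ys assume perp: "(y, ys) \<in> perp_op M"
  have "ys \<in> ran_op M"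
  proof (rule ccontr)
    assume "ys \<notin> ran_op M"
    moreover have "subspace (ran_op M)"
      using M subspace_ran_op by (auto simp: max_self_cancelling_def self_cancelling_def)
    ultimately obtain \<phi> :: "('a \<Rightarrow>\<^sub>L real) \<Rightarrow>\<^sub>L real"
      where \<phi>: "\<And>xs. xs \<in> ran_op M \<Longrightarrow> \<phi> xs = 0" "\<phi> ys \<noteq> 0"
      using separating_functional_closed_subspace closed by metis
    obtain z where z: "\<And>f. \<phi> f = f z"
      using reflexive by (auto simp: reflexive_space_def)
    have "(z, 0) \<in> perp_op M"
      using \<phi>(1) by (force simp: mem_perp_op_iff ran_op_def z)
    then have "(z, 0) \<in> M"
      using max_self_cancelling_perp_op_mem[OF M] by simp
    then show False
      using perp \<phi>(2) by (force simp: mem_perp_op_iff z)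
  qed
  then show "(y, ys) \<in> M"
    using max_self_cancelling_perp_op_memI[OF M perp] by blast
qed

theorem lemma7:
  fixes M :: "('a::banach \<times> ('a \<Rightarrow>\<^sub>L real)) set"
  assumes "subspace M"
  shows "(skew_op M \<longrightarrow> max_self_cancelling M)
    \<and> (max_self_cancelling M \<and> closed (dom_op M) \<longrightarrow> skew_op M)
    \<and> (max_self_cancelling M \<and> closed (ran_op M) \<and> reflexive_space TYPE('a) \<longrightarrow> skew_op M)"
  using skew_op_imp_max_self_cancelling max_self_cancelling_closed_dom_op_skew
    max_self_cancelling_closed_ran_op_skew
  by blast

end
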